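(* Let $a$ be a positive integer, $\beta\in[0,1]$, and $r:=(\phi^{\beta/a}-1)/(\phi^{1/a}-1)$. For an integer $n>1$ write $\mathfrak F^{-1}(n^a)=m+p$ with $m\in\mathbb{N}$ and $p=\{\mathfrak F^{-1}(n^a)\}$, and let $P_n:=\#\{k\le n:\{\mathfrak F^{-1}(k^a)\}\le\beta\}/n$. Then $$P_n=\begin{cases}\dfrac{r+\phi^{p/a}-1}{\phi^{p/a}}+O(m\phi^{-m/a})&\text{if }0\le p\le\beta,\\[2mm]\dfrac{r+\phi^{\beta/a}-1}{\phi^{p/a}}+O(m\phi^{-m/a})&\text{if }\beta<p<1.\end{cases}$$ In particular $\limsup_n P_n=r\phi^{1/a-\beta/a}=\beta+O(1/a)$ and $\liminf_n P_n=r=\beta+O(1/a)$.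
   Context: $\phi$ is the golden ratio; $\mathfrak F(x)=\frac{\phi}{\sqrt5}(\phi^x+\phi^{-x}\cos(\pi x)\phi^{-2})$, increasing on $[1,\infty)$ with $\mathfrak F(n)=F_n$ where $F_1=1,F_2=2,F_{n+2}=F_{n+1}+F_n$; $\mathfrak F^{-1}$ is its inverse on $[1,\infty)$; $\{y\}$ denotes the fractional part. *)

theory Defs
  imports "HOL-Analysis.Analysis" "HOL-Library.Landau_Symbols"
begin

definition phi :: real where
  "phi = (1 + sqrt 5) / 2"

text \<open>The continuous Fibonacci interpolant: FF n = F_n with F_1 = 1, F_2 = 2.\<close>
definition FF :: "real \<Rightarrow> real" where
  "FF x = phi / sqrt 5 * (phi powr x + phi powr (- x) * cos (pi * x) * phi powr (-2))"

definition FFinv :: "real \<Rightarrow> real" where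
  "FFinv = inv_into {1..} FF"

definition rr :: "nat \<Rightarrow> real \<Rightarrow> real" where
  "rr a \<beta> = (phi powr (\<beta> / real a) - 1) / (phi powr (1 / real a) - 1)"

definition Pn :: "nat \<Rightarrow> real \<Rightarrow> nat \<Rightarrow> real" where
  "Pn a \<beta> n = real (card {k \<in> {1..n}. frac (FFinv (real k ^ a)) \<le> \<beta>}) / real n"

definition mm :: "nat \<Rightarrow> nat \<Rightarrow> real" where
  "mm a n = of_int \<lfloor>FFinv (real n ^ a)\<rfloor>"

definition pp :: "nat \<Rightarrow> nat \<Rightarrow> real" where
  "pp a n = frac (FFinv (real n ^ a))"

definition main_term :: "nat \<Rightarrow> real \<Rightarrow> nat \<Rightarrow> real" where
  "main_term a \<beta> n =
     (if pp a n \<le> \<beta>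
      then (rr a \<beta> + phi powr (pp a n / real a) - 1) / phi powr (pp a n / real a)
      else (rr a \<beta> + phi powr (\<beta> / real a) - 1) / phi powr (pp a n / real a))"

end

theory Submission
  imports Defs "HOL-Real_Asymp.Real_Asymp"
begin

(* Since FF increases on [1, oo), FFinv (k^a) >= x iff k >= FF_root a x = FF x powr (1/a). Hence the
   k with floor (FFinv (k^a)) = j and fractional part at most beta are the integers in the block
   [FF_root a j, FF_root a (j + beta)]. By Binet's formula FF_root a is within 1 of
   FF_root_approx a x = (phi / sqrt 5) powr (1/a) * phi powr (x/a), so the block has
   FF_root_approx a (j + beta) - FF_root_approx a j + O(1) elements. Writing FFinv (n^a) = m + p,
   the blocks j < m are complete and the last one is cut off at p; summing the geometric series
   gives FF_root_approx a (m + p) times the main term up to O(m), and n is within 1 of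
   FF_root_approx a (m + p), whence the error O(m phi^(-m/a)).
   The main term is a continuous function of p, minimal at p = 0 and maximal at p = beta. As
   FF_root a (x + eps) - FF_root a x tends to infinity, p comes arbitrarily close from above to
   every point of [0, 1) for infinitely many n, which gives liminf and limsup. Finally
   beta - ln phi / a <= rr a beta <= beta by convexity of exp. *)

lemma abs_powr_sub_one_le:
  fixes e s :: real
  assumes "\<bar>e\<bar> < 1" "0 \<le> s" "s \<le> 1"
  shows "\<bar>(1 + e) powr s - 1\<bar> \<le> \<bar>e\<bar>"
proof (cases "e \<ge> 0")
  case True
  have "1 \<le> (1 + e) powr s" "(1 + e) powr s \<le> (1 + e) powr 1"
    using True assms powr_mono[of s 1 "1 + e"] by (auto intro: ge_one_powr_ge_zero)
  then show ?thesis using True by auto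
next
  case False
  have "(1 + e) powr s \<le> 1" "(1 + e) powr 1 \<le> (1 + e) powr s"
    using False assms powr_mono'[of s 1 "1 + e"] by (auto intro: powr_le1)
  then show ?thesis using False by auto
qed

lemma nat_interval_eq:
  assumes "0 \<le> u" "u \<le> v"
  shows "{k::nat. u \<le> real k \<and> real k \<le> v} = {nat \<lceil>u\<rceil>..nat \<lfloor>v\<rfloor>}"
proof -
  have "\<lfloor>v\<rfloor> \<ge> 0"
    using assms by simp
  then show ?thesis
    using assms by (auto simp: ceiling_le_iff le_floor_iff nat_le_iff le_nat_iff)
qed

lemma card_nat_interval:
  assumes "0 \<le> u" "u \<le> v"
  shows "\<bar>real (card {k::nat. u \<le> real k \<and> real k \<le> v}) - (v - u)\<bar> \<le> 1"
proof -
  have "\<lceil>u\<rceil> \<le> \<lfloor>v\<rfloor> + 1" "0 \<le> \<lceil>u\<rceil>" "0 \<le> \<lfloor>v\<rfloor>"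
    using assms ceiling_correct[of u] floor_correct[of v] by linarith+
  then have "real (card {nat \<lceil>u\<rceil>..nat \<lfloor>v\<rfloor>}) = of_int \<lfloor>v\<rfloor> + 1 - of_int \<lceil>u\<rceil>"
    by (simp add: of_nat_diff nat_le_iff)
  then show ?thesis
    unfolding nat_interval_eq[OF assms]
    using ceiling_correct[of u] floor_correct[of v] by linarith
qed

lemma frac_eq_of_floor: "\<lfloor>y\<rfloor> = int j \<Longrightarrow> frac y = y - real j"
  by (simp add: frac_def)

lemma mem_atLeastAtMost_iff_floor_frac:
  assumes "0 \<le> b" "b < 1"
  shows "y \<in> {real i..real i + b} \<longleftrightarrow> \<lfloor>y\<rfloor> = int i \<and> frac y \<le> b"
  using assms frac_eq_of_floor[of y i] by (auto simp: floor_eq_iff)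

lemma le_and_frac_le_iff:
  fixes y t \<beta> :: real
  assumes "1 \<le> y" "1 \<le> t" "0 \<le> \<beta>" "\<beta> < 1"
  defines "M \<equiv> nat \<lfloor>t\<rfloor>"
  shows "y \<le> t \<and> frac y \<le> \<beta> \<longleftrightarrow>
           (\<exists>j\<in>{1..<M}. y \<in> {real j..real j + \<beta>}) \<or> y \<in> {real M..real M + min (frac t) \<beta>}"
proof -
  define j where "j = nat \<lfloor>y\<rfloor>"
  have floor_y: "\<lfloor>y\<rfloor> = int j" and floor_t: "\<lfloor>t\<rfloor> = int M" and "j \<ge> 1"
    unfolding j_def M_def using assms by (simp_all add: le_nat_iff)
  have "y \<le> t \<longleftrightarrow> j < M \<or> (j = M \<and> frac y \<le> frac t)"
    using frac_eq_of_floor[OF floor_y] frac_eq_of_floor[OF floor_t] frac_lt_1[of y] frac_lt_1[of t]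
      frac_ge_0[of y] frac_ge_0[of t]
    by (cases j M rule: linorder_cases) auto
  moreover have min_bounds: "0 \<le> min (frac t) \<beta>" "min (frac t) \<beta> < 1"
    using assms(3,4) by auto
  ultimately show ?thesis
    unfolding mem_atLeastAtMost_iff_floor_frac[OF assms(3,4)]
      mem_atLeastAtMost_iff_floor_frac[OF min_bounds]
    using floor_y \<open>j \<ge> 1\<close> frac_ge_0[of t] assms(3) by auto
qed

lemma abs_ratio_sub_le:
  fixes C n N Z E :: real
  assumes "0 \<le> C" "C \<le> n" "N > 0" "\<bar>n - N\<bar> \<le> 1" "\<bar>C - Z\<bar> \<le> E"
  shows "\<bar>C / n - Z / N\<bar> \<le> (1 + E) / N"
proof (cases "n = 0")
  case True
  then show ?thesis
    using assms by (simp add: abs_le_iff divide_le_eq)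
next
  case False
  then have "n > 0"
    using assms by simp
  have "\<bar>C * (N - n) + n * (C - Z)\<bar> \<le> C * \<bar>n - N\<bar> + n * \<bar>C - Z\<bar>"
    using assms \<open>n > 0\<close> abs_triangle_ineq[of "C * (N - n)" "n * (C - Z)"]
    by (simp add: abs_mult abs_minus_commute)
  also have "\<dots> \<le> n * 1 + n * E"
    using assms \<open>n > 0\<close> by (intro add_mono mult_mono) auto
  finally have "\<bar>C * (N - n) + n * (C - Z)\<bar> / (n * N) \<le> n * (1 + E) / (n * N)"
    using \<open>n > 0\<close> assms(3) by (intro divide_right_mono) (auto simp: algebra_simps)
  moreover have "C / n - Z / N = (C * (N - n) + n * (C - Z)) / (n * N)"
    using \<open>n > 0\<close> assms(3) by (simp add: field_simps)
  ultimately show ?thesis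
    using \<open>n > 0\<close> assms(3) by (simp add: abs_divide)
qed

lemma affine_min_div_bounds:
  fixes r q b w :: real
  assumes "0 \<le> r" "r \<le> 1" "1 \<le> w" "w \<le> q" "1 \<le> b" "r * q = r + b - 1"
  shows "r \<le> (r + min w b - 1) / w" and "(r + min w b - 1) / w \<le> r * q / b"
proof -
  have "r \<le> (r + min w b - 1) / w \<and> (r + min w b - 1) / w \<le> r * q / b"
  proof (cases "w \<le> b")
    case True
    have "(r + min w b - 1) / w = 1 - (1 - r) / w" "r * q / b = 1 - (1 - r) / b"
      using True assms by (simp_all add: field_simps)
    moreover have "(1 - r) / w \<le> (1 - r) / 1" "(1 - r) / b \<le> (1 - r) / w"
      using True assms by (intro divide_left_mono; simp)+
    ultimately show ?thesis by simp
  next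
    case False
    have "(r + min w b - 1) / w = r * q / w"
      using False assms by simp
    moreover have "r * q / q \<le> r * q / w" "r * q / w \<le> r * q / b"
      using False assms by (intro divide_left_mono; simp)+
    moreover have "r * q / q = r"
      using assms by (intro nonzero_mult_div_cancel_right) linarith
    ultimately show ?thesis by linarith
  qed
  then show "r \<le> (r + min w b - 1) / w" "(r + min w b - 1) / w \<le> r * q / b"
    by auto
qed

lemma limsup_eq_of_tendsto_diff:
  fixes X Y :: "nat \<Rightarrow> real"
  assumes lim: "(\<lambda>n. X n - Y n) \<longlonglongrightarrow> 0"
    and le: "\<And>n. Y n \<le> L"
    and close: "\<And>e. e > 0 \<Longrightarrow> \<exists>\<^sub>F n in sequentially. L - e < Y n"
  shows "limsup (\<lambda>n. ereal (X n)) = ereal L"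
proof (rule antisym)
  have close_X: "\<forall>\<^sub>F n in sequentially. X n < Y n + e" "\<forall>\<^sub>F n in sequentially. Y n - e < X n"
    if "e > 0" for e
    using tendstoD[OF lim that] by (auto elim!: eventually_mono simp: dist_real_def)
  show "limsup (\<lambda>n. ereal (X n)) \<le> ereal L"
    unfolding Limsup_le_iff
  proof (intro allI impI)
    fix y :: ereal
    assume "ereal L < y"
    then obtain z where "L < z" "ereal z < y"
      using ereal_dense2 by (metis ereal_less(1) less_ereal.simps(1))
    have "X n < z" if "X n < Y n + (z - L)" for n
      using that le[of n] by linarith
    then have "\<forall>\<^sub>F n in sequentially. X n < z"
      using close_X(1)[of "z - L"] \<open>L < z\<close> by (auto elim: eventually_mono)
    then show "\<forall>\<^sub>F n in sequentially. ereal (X n) < y"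
      using \<open>ereal z < y\<close> by (auto elim!: eventually_mono intro: less_trans[of _ "ereal z"])
  qed
  show "ereal L \<le> limsup (\<lambda>n. ereal (X n))"
  proof (rule ccontr)
    assume "\<not> ereal L \<le> limsup (\<lambda>n. ereal (X n))"
    then obtain z where z: "limsup (\<lambda>n. ereal (X n)) < ereal z" "z < L"
      using ereal_dense2 by (metis linorder_not_le less_ereal.simps(1))
    then have "\<forall>\<^sub>F n in sequentially. X n < z"
      using Limsup_le_iff[THEN iffD1, OF order.refl] by fastforce
    moreover have "\<forall>\<^sub>F n in sequentially. Y n - (L - z) / 2 < X n"
      using close_X(2)[of "(L - z) / 2"] z(2) by simp
    ultimately have "\<forall>\<^sub>F n in sequentially. \<not> L - (L - z) / 2 < Y n"
      by (rule eventually_elim2) (simp add: field_simps)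
    moreover have "\<exists>\<^sub>F n in sequentially. L - (L - z) / 2 < Y n"
      using close z(2) by simp
    ultimately show False
      unfolding frequently_def by simp
  qed
qed

lemma liminf_eq_of_tendsto_diff:
  fixes X Y :: "nat \<Rightarrow> real"
  assumes "(\<lambda>n. X n - Y n) \<longlonglongrightarrow> 0"
    and "\<And>n. L \<le> Y n"
    and "\<And>e. e > 0 \<Longrightarrow> \<exists>\<^sub>F n in sequentially. Y n < L + e"
  shows "liminf (\<lambda>n. ereal (X n)) = ereal L"
proof -
  have "limsup (\<lambda>n. ereal (- X n)) = ereal (- L)"
  proof (rule limsup_eq_of_tendsto_diff[where Y = "\<lambda>n. - Y n"])
    show "(\<lambda>n. - X n - - Y n) \<longlonglongrightarrow> 0"
      using tendsto_minus[OF assms(1)] by simp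
    show "\<exists>\<^sub>F n in sequentially. - L - e < - Y n" if "e > 0" for e
      using assms(3)[OF that] by (simp add: algebra_simps)
  qed (use assms(2) in simp)
  then show ?thesis
    using ereal_Liminf_uminus[of sequentially "\<lambda>n. ereal (- X n)"] by simp
qed

lemma phi_pos: "phi > 0"
  and phi_gt_3_2: "phi > 3 / 2"
  and phi_gt_1: "phi > 1"
  and phi_less_2: "phi < 2"
proof -
  have "2 < sqrt 5" "sqrt 5 < 3"
    by (auto intro: real_less_rsqrt real_less_lsqrt)
  then show "phi > 3 / 2" "phi < 2" unfolding phi_def by auto
  then show "phi > 1" "phi > 0" by auto
qed

lemma phi_squared: "phi\<^sup>2 = phi + 1"
  unfolding phi_def by (simp add: power2_eq_square field_simps)

lemma sqrt_5_eq_phi: "sqrt 5 = 2 * phi - 1"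
  unfolding phi_def by (simp add: field_simps)

lemma ln_phi_pos: "ln phi > 0"
  using phi_gt_1 by simp

lemma ln_phi_le_1: "ln phi \<le> 1"
  using ln_le_minus_one[OF phi_pos] phi_less_2 by linarith

lemma ln_phi_ge: "2 - phi \<le> ln phi"
proof -
  have "inverse phi = phi - 1"
    using phi_squared phi_pos by (simp add: field_simps power2_eq_square)
  moreover have "ln (inverse phi) \<le> inverse phi - 1"
    using phi_pos by (intro ln_le_minus_one) simp
  moreover have "ln (inverse phi) = - ln phi"
    using phi_pos by (simp add: ln_inverse)
  ultimately show ?thesis by linarith
qed

section \<open>The interpolant FF and its inverse\<close>

definition FF' :: "real \<Rightarrow> real" where
  "FF' x = phi / sqrt 5 *
     (ln phi * phi powr x - phi powr (- x - 2) * (ln phi * cos (pi * x) + pi * sin (pi * x)))"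

lemma FF_has_derivative: "(FF has_real_derivative FF' x) (at x)"
proof -
  have "phi powr (- x) * phi powr (-2) = phi powr (- x - 2)"
    by (simp add: powr_add[symmetric])
  then have "((\<lambda>x. phi powr x + phi powr (- x) * cos (pi * x) * phi powr (-2)) has_real_derivative
      ln phi * phi powr x - phi powr (- x - 2) * (ln phi * cos (pi * x) + pi * sin (pi * x))) (at x)"
    by (auto intro!: derivative_eq_intros simp: algebra_simps)
  then show ?thesis
    unfolding FF_def[abs_def] FF'_def by (rule DERIV_cmult)
qed

lemma cos_sin_nonpos_third_quadrant:
  assumes "1 \<le> x" "x \<le> 3 / 2"
  shows "cos (pi * x) \<le> 0" "sin (pi * x) \<le> 0"
proof -
  have "0 \<le> pi * (x - 1)" "pi * (x - 1) \<le> pi / 2"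
    using assms by auto
  then have "cos (pi * (x - 1)) \<ge> 0" "sin (pi * (x - 1)) \<ge> 0"
    using cos_ge_zero[of "pi * (x - 1)"] sin_ge_zero[of "pi * (x - 1)"] by linarith+
  moreover have "cos (pi * x) = - cos (pi * (x - 1))" "sin (pi * x) = - sin (pi * (x - 1))"
    by (simp_all add: right_diff_distrib cos_diff sin_diff)
  ultimately show "cos (pi * x) \<le> 0" "sin (pi * x) \<le> 0"
    by simp_all
qed

lemma FF'_pos:
  assumes "x \<ge> 1"
  shows "FF' x > 0"
proof -
  \<comment> \<open>On [1, 3/2] both trigonometric terms are nonpositive; beyond, phi powr (2x + 2) \<ge> phi ^ 5\<close>
  define S where "S = ln phi * cos (pi * x) + pi * sin (pi * x)"
  have "S < ln phi * phi powr (2 * x + 2)"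
  proof (cases "x \<le> 3 / 2")
    case True
    then have "S \<le> 0"
      unfolding S_def using cos_sin_nonpos_third_quadrant[OF assms] ln_phi_pos
      by (simp add: add_nonpos_nonpos mult_nonneg_nonpos)
    moreover have "ln phi * phi powr (2 * x + 2) > 0"
      using ln_phi_pos phi_pos by simp
    ultimately show ?thesis by linarith
  next
    case False
    have "S \<le> ln phi + pi"
      unfolding S_def using ln_phi_pos by (intro add_mono) (simp_all add: mult_left_le)
    have "phi ^ 5 = 5 * phi + 3"
      using phi_squared by algebra
    then have "5 * phi + 3 \<le> phi powr (2 * x + 2)"
      using False phi_gt_1 powr_mono[of 5 "2 * x + 2" phi] by (simp add: powr_realpow)
    then have "ln phi * (5 * phi + 3) \<le> ln phi * phi powr (2 * x + 2)"
      using ln_phi_pos by (intro mult_left_mono) auto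
    then have "ln phi * (5 * phi + 2) + ln phi \<le> ln phi * phi powr (2 * x + 2)"
      by (simp add: algebra_simps)
    moreover have "(2 - phi) * (5 * phi + 2) = 3 * phi - 1"
      using phi_squared by (simp add: algebra_simps power2_eq_square)
    then have "ln phi * (5 * phi + 2) > pi"
      using mult_right_mono[OF ln_phi_ge, of "5 * phi + 2"] phi_gt_3_2 pi_approx(2) by simp
    ultimately show ?thesis
      using \<open>S \<le> ln phi + pi\<close> by linarith
  qed
  then have "phi powr (- x - 2) * S < phi powr (- x - 2) * (ln phi * phi powr (2 * x + 2))"
    using phi_pos by simp
  also have "\<dots> = ln phi * phi powr x"
    by (simp add: powr_add[symmetric])
  finally show ?thesis
    unfolding FF'_def S_def using phi_pos by simp
qed

lemma FF_1: "FF 1 = 1"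
proof -
  have "phi powr (-1) * phi powr (-2) = 1 / phi ^ 3"
    using phi_pos by (simp add: powr_add[symmetric] powr_minus_divide powr_numeral power3_eq_cube power2_eq_square)
  then have "FF 1 = phi / sqrt 5 * (phi - 1 / phi ^ 3)"
    unfolding FF_def using phi_pos by (simp add: mult.assoc)
  also have "\<dots> = (phi ^ 4 - 1) / (sqrt 5 * phi\<^sup>2)"
    using phi_pos by (simp add: field_simps eval_nat_numeral)
  also have "phi ^ 4 - 1 = sqrt 5 * phi\<^sup>2"
    unfolding sqrt_5_eq_phi using phi_squared by algebra
  finally show ?thesis
    using phi_pos by simp
qed

lemma FF_strict_mono_on: "strict_mono_on {1..} FF"
proof (rule strict_mono_onI)
  fix x y :: real
  assume "x \<in> {1..}" "y \<in> {1..}" "x < y"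
  show "FF x < FF y"
    using \<open>x < y\<close>
  proof (rule DERIV_pos_imp_increasing)
    fix t
    assume "x \<le> t"
    then show "\<exists>D. (FF has_real_derivative D) (at t) \<and> D > 0"
      using FF_has_derivative FF'_pos \<open>x \<in> {1..}\<close> by fastforce
  qed
qed

lemma FF_le_iff: "x \<ge> 1 \<Longrightarrow> y \<ge> 1 \<Longrightarrow> FF x \<le> FF y \<longleftrightarrow> x \<le> y"
  using strict_mono_on_less_eq[OF FF_strict_mono_on] by simp

lemma FF_ge_1: "x \<ge> 1 \<Longrightarrow> FF x \<ge> 1"
  using FF_le_iff[of 1 x] FF_1 by simp

lemma FF_ge_linear: "x \<ge> 0 \<Longrightarrow> FF x \<ge> phi / sqrt 5 * ln phi * x"
proof -
  assume "x \<ge> 0"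
  have "phi powr (- x) * cos (pi * x) * phi powr (-2) \<ge> -1"
  proof -
    have "\<bar>phi powr (- x) * cos (pi * x) * phi powr (-2)\<bar> \<le> 1 * 1 * 1"
      unfolding abs_mult using \<open>x \<ge> 0\<close> phi_gt_1
      by (intro mult_mono) (auto simp: powr_minus_divide ge_one_powr_ge_zero)
    then show ?thesis by linarith
  qed
  moreover have "phi powr x \<ge> 1 + x * ln phi"
    using exp_ge_add_one_self[of "x * ln phi"] phi_pos by (simp add: powr_def)
  ultimately have "phi powr x + phi powr (- x) * cos (pi * x) * phi powr (-2) \<ge> ln phi * x"
    by (simp add: mult.commute)
  then show ?thesis
    unfolding FF_def using mult_left_mono[OF _ less_imp_le, of _ _ "phi / sqrt 5"] phi_pos
    by (simp add: mult.assoc)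
qed

lemma FF_image: "FF ` {1..} = {1..}"
proof (intro equalityI subsetI)
  fix y :: real
  assume "y \<in> {1..}"
  define K where "K = phi / sqrt 5 * ln phi"
  define b where "b = max 1 (y / K)"
  have "K > 0"
    unfolding K_def using phi_pos ln_phi_pos by simp
  moreover have "y / K \<le> b"
    unfolding b_def by simp
  ultimately have "y \<le> K * b"
    by (simp add: pos_divide_le_eq mult.commute)
  moreover have "b \<ge> 1"
    unfolding b_def by simp
  ultimately have "y \<le> FF b"
    using FF_ge_linear[of b] unfolding K_def by simp
  moreover have "continuous_on {1..b} FF"
    using FF_has_derivative by (meson DERIV_isCont continuous_at_imp_continuous_on)
  ultimately obtain x where "1 \<le> x" "FF x = y"
    using IVT'[of FF 1 y b] FF_1 \<open>y \<in> {1..}\<close> unfolding b_def by auto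
  then show "y \<in> FF ` {1..}" by auto
qed (auto simp: FF_ge_1)

lemma FF_bij_betw: "bij_betw FF {1..} {1..}"
  using FF_image strict_mono_on_imp_inj_on[OF FF_strict_mono_on] by (simp add: bij_betw_def)

lemma FFinv_ge_1: "y \<ge> 1 \<Longrightarrow> FFinv y \<ge> 1"
  using bij_betw_inv_into[OF FF_bij_betw] unfolding FFinv_def by (auto dest: bij_betwE)

lemma FF_FFinv: "y \<ge> 1 \<Longrightarrow> FF (FFinv y) = y"
  unfolding FFinv_def using FF_image by (intro f_inv_into_f) auto

lemma le_FFinv_iff: "x \<ge> 1 \<Longrightarrow> y \<ge> 1 \<Longrightarrow> x \<le> FFinv y \<longleftrightarrow> FF x \<le> y"
  using FF_le_iff[of x "FFinv y"] FF_FFinv[of y] FFinv_ge_1[of y] by simp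

lemma FFinv_le_iff: "x \<ge> 1 \<Longrightarrow> y \<ge> 1 \<Longrightarrow> FFinv y \<le> x \<longleftrightarrow> y \<le> FF x"
  using FF_le_iff[of "FFinv y" x] FF_FFinv[of y] FFinv_ge_1[of y] by simp

section \<open>Roots of FF and Binet's approximation\<close>

locale positive_exponent =
  fixes a :: nat
  assumes a_pos: "a \<ge> 1"

definition FF_root :: "nat \<Rightarrow> real \<Rightarrow> real" where
  "FF_root a x = FF x powr (1 / real a)"

(* the a-th root of the dominant term phi / sqrt 5 * phi powr x of FF x *)
definition FF_root_approx :: "nat \<Rightarrow> real \<Rightarrow> real" where
  "FF_root_approx a x = (phi / sqrt 5) powr (1 / real a) * phi powr (x / real a)"

lemma FF_root_approx_pos: "FF_root_approx a x > 0"
  unfolding FF_root_approx_def using phi_pos by simp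

lemma FF_root_approx_add: "FF_root_approx a (x + y) = FF_root_approx a x * phi powr (y / real a)"
  unfolding FF_root_approx_def by (simp add: powr_add add_divide_distrib)

context positive_exponent
begin

lemma FF_root_ge_1: "x \<ge> 1 \<Longrightarrow> FF_root a x \<ge> 1"
  unfolding FF_root_def by (intro ge_one_powr_ge_zero FF_ge_1) auto

lemma FF_root_mono: "1 \<le> x \<Longrightarrow> x \<le> y \<Longrightarrow> FF_root a x \<le> FF_root a y"
  unfolding FF_root_def using FF_le_iff[of x y] FF_ge_1[of x] by (intro powr_mono2) auto

lemma FF_root_power: "x \<ge> 1 \<Longrightarrow> FF_root a x ^ a = FF x"
  unfolding FF_root_def using FF_ge_1[of x] a_pos by (simp add: powr_power)

lemma le_FFinv_power_iff:
  assumes "x \<ge> 1" "y \<ge> 1"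
  shows "x \<le> FFinv (y ^ a) \<longleftrightarrow> FF_root a x \<le> y"
proof -
  have "x \<le> FFinv (y ^ a) \<longleftrightarrow> FF_root a x ^ a \<le> y ^ a"
    using le_FFinv_iff[of x "y ^ a"] FF_root_power assms by simp
  also have "\<dots> \<longleftrightarrow> FF_root a x \<le> y"
    using FF_root_ge_1[of x] assms a_pos by (intro power_mono_iff) auto
  finally show ?thesis .
qed

lemma FFinv_power_le_iff:
  assumes "x \<ge> 1" "y \<ge> 1"
  shows "FFinv (y ^ a) \<le> x \<longleftrightarrow> y \<le> FF_root a x"
proof -
  have "FFinv (y ^ a) \<le> x \<longleftrightarrow> y ^ a \<le> FF_root a x ^ a"
    using FFinv_le_iff[of x "y ^ a"] FF_root_power assms by simp
  also have "\<dots> \<longleftrightarrow> y \<le> FF_root a x"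
    using FF_root_ge_1[of x] assms a_pos by (intro power_mono_iff) auto
  finally show ?thesis .
qed

lemma FF_root_FFinv_power: "y \<ge> 1 \<Longrightarrow> FF_root a (FFinv (y ^ a)) = y"
proof -
  assume "y \<ge> 1"
  then have "FFinv (y ^ a) \<ge> 1"
    by (simp add: FFinv_ge_1)
  then show ?thesis
    using le_FFinv_power_iff[of "FFinv (y ^ a)" y] FFinv_power_le_iff[of "FFinv (y ^ a)" y] \<open>y \<ge> 1\<close>
    by simp
qed

lemma FF_root_approx_error:
  assumes "x \<ge> 1"
  shows "\<bar>FF_root a x - FF_root_approx a x\<bar> \<le> 1"
proof -
  define s where "s = 1 / real a"
  define e where "e = phi powr (- 2 * x - 2) * cos (pi * x)"
  have s: "0 \<le> s" "s \<le> 1"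
    unfolding s_def using a_pos by auto
  have e_le: "\<bar>e\<bar> \<le> phi powr (- 2 * x - 2)"
    unfolding e_def abs_mult using mult_left_le[OF abs_cos_le_one[of "pi * x"]] by simp
  also have "\<dots> < 1"
    using assms phi_gt_1 by (intro powr_less_one) auto
  finally have "\<bar>e\<bar> < 1" .
  have FF_eq: "FF x = (phi / sqrt 5 * phi powr x) * (1 + e)"
    unfolding FF_def e_def by (simp add: algebra_simps powr_add[symmetric])
  have "FF_root a x = (phi / sqrt 5 * phi powr x) powr s * (1 + e) powr s"
    unfolding FF_root_def FF_eq s_def using phi_pos \<open>\<bar>e\<bar> < 1\<close> by (intro powr_mult)
  also have "(phi / sqrt 5 * phi powr x) powr s = FF_root_approx a x"
    unfolding FF_root_approx_def s_def using phi_pos by (subst powr_mult) (auto simp: powr_powr)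
  finally have "FF_root a x = FF_root_approx a x * (1 + e) powr s" .
  then have "\<bar>FF_root a x - FF_root_approx a x\<bar> = \<bar>FF_root_approx a x * ((1 + e) powr s - 1)\<bar>"
    by (simp add: algebra_simps)
  also have "\<dots> = FF_root_approx a x * \<bar>(1 + e) powr s - 1\<bar>"
    using FF_root_approx_pos[of a x] by (simp add: abs_mult)
  also have "\<dots> \<le> FF_root_approx a x * phi powr (- 2 * x - 2)"
    using abs_powr_sub_one_le[OF \<open>\<bar>e\<bar> < 1\<close> s] e_le FF_root_approx_pos[of a x]
    by (intro mult_left_mono) auto
  also have "\<dots> = (phi / sqrt 5) powr s * phi powr (x / real a - 2 * x - 2)"
    unfolding FF_root_approx_def s_def by (simp add: powr_add[symmetric] algebra_simps)
  also have "\<dots> \<le> 1 * 1"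
  proof (intro mult_mono)
    show "(phi / sqrt 5) powr s \<le> 1"
      using phi_gt_1 sqrt_5_eq_phi s by (intro powr_le1) auto
    have "x / real a \<le> x"
      using assms a_pos by (simp add: divide_le_eq)
    then show "phi powr (x / real a - 2 * x - 2) \<le> 1"
      using phi_gt_1 assms powr_mono[of "x / real a - 2 * x - 2" 0 phi] by simp
  qed auto
  finally show ?thesis by simp
qed

end

definition main_term_at :: "nat \<Rightarrow> real \<Rightarrow> real \<Rightarrow> real" where
  "main_term_at a \<beta> p = (rr a \<beta> + phi powr (min p \<beta> / real a) - 1) / phi powr (p / real a)"

lemma main_term_eq: "main_term a \<beta> n = main_term_at a \<beta> (pp a n)"
  unfolding main_term_def main_term_at_def by (simp add: min_def)

lemma FF_root_approx_mult_main_term_at: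
  "FF_root_approx a (x + p) * main_term_at a \<beta> p
     = FF_root_approx a x * (rr a \<beta> + phi powr (min p \<beta> / real a) - 1)"
  unfolding main_term_at_def FF_root_approx_add using phi_pos by simp

context positive_exponent
begin

lemma phi_root_gt_1: "phi powr (1 / real a) > 1"
  using phi_gt_1 a_pos by (intro gr_one_powr) auto

lemma phi_root_sub_1_le: "phi powr (1 / real a) - 1 \<le> ln phi / real a * phi powr (1 / real a)"
proof -
  define s where "s = ln phi / real a"
  have "phi powr (1 / real a) = exp s"
    unfolding s_def powr_def using phi_pos by simp
  then show ?thesis
    using exp_ge_add_one_self[of "- s"] mult_left_mono[of "1 - s" "exp (- s)" "exp s"]
    unfolding s_def[symmetric] by (simp add: exp_minus field_simps)
qed

lemma rr_mult_phi_root: "rr a \<beta> * phi powr (1 / real a) = rr a \<beta> + phi powr (\<beta> / real a) - 1"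
  unfolding rr_def using phi_root_gt_1 by (simp add: field_simps)

lemma rr_nonneg: "0 \<le> \<beta> \<Longrightarrow> 0 \<le> rr a \<beta>"
  unfolding rr_def using phi_root_gt_1 phi_gt_1 by (simp add: ge_one_powr_ge_zero)

lemma rr_le:
  assumes "0 \<le> \<beta>" "\<beta> \<le> 1"
  shows "rr a \<beta> \<le> \<beta>"
proof -
  define s where "s = ln phi / real a"
  have "exp ((1 - \<beta>) *\<^sub>R 0 + \<beta> *\<^sub>R s) \<le> (1 - \<beta>) * exp 0 + \<beta> * exp s"
    using assms by (intro convex_onD[OF exp_convex]) auto
  then have "phi powr (\<beta> / real a) - 1 \<le> \<beta> * (phi powr (1 / real a) - 1)"
    unfolding s_def powr_def using phi_pos by (simp add: algebra_simps)
  then show ?thesis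
    unfolding rr_def using phi_root_gt_1 by (simp add: divide_le_eq)
qed

lemma rr_ge:
  assumes "0 \<le> \<beta>" "\<beta> \<le> 1"
  shows "\<beta> - ln phi / real a \<le> rr a \<beta>"
proof -
  define s where "s = ln phi / real a"
  define q where "q = phi powr (1 / real a)"
  have s_pos: "s > 0"
    unfolding s_def using ln_phi_pos a_pos by simp
  have "phi powr (\<beta> / real a) = exp (\<beta> * s)"
    unfolding s_def powr_def using phi_pos by simp
  then have "rr a \<beta> * (q - 1) = exp (\<beta> * s) - 1"
    unfolding rr_def q_def using phi_root_gt_1 by simp
  have "q - 1 \<le> s * q"
    unfolding q_def s_def by (rule phi_root_sub_1_le)
  have "\<beta> * s \<le> rr a \<beta> * (q - 1)"
    using exp_ge_add_one_self[of "\<beta> * s"] \<open>rr a \<beta> * (q - 1) = exp (\<beta> * s) - 1\<close> by linarith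
  also have "\<dots> \<le> rr a \<beta> * (s * q)"
    using \<open>q - 1 \<le> s * q\<close> rr_nonneg[OF assms(1)] by (rule mult_left_mono)
  finally have "\<beta> * s \<le> rr a \<beta> * q * s"
    by (simp add: algebra_simps)
  then have "\<beta> \<le> rr a \<beta> * q"
    using s_pos by simp
  moreover have "s \<le> 1"
    unfolding s_def using ln_phi_le_1 a_pos by (simp add: divide_le_eq)
  ultimately have "\<beta> * (1 - s) \<le> rr a \<beta> * (1 - s * q + q - 1)"
    using mult_right_mono[of \<beta> "rr a \<beta> * q" "1 - s"] by (simp add: algebra_simps)
  also have "\<dots> \<le> rr a \<beta>"
    using \<open>q - 1 \<le> s * q\<close> rr_nonneg[OF assms(1)] mult_left_mono[of "1 - s * q + q - 1" 1 "rr a \<beta>"]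
    by simp
  finally have "\<beta> - \<beta> * s \<le> rr a \<beta>"
    by (simp add: algebra_simps)
  moreover have "\<beta> * s \<le> s"
    using assms s_pos by (simp add: mult_left_le_one_le)
  ultimately show ?thesis
    unfolding s_def by linarith
qed

lemma abs_rr_sub_le:
  assumes "0 \<le> \<beta>" "\<beta> \<le> 1"
  shows "\<bar>rr a \<beta> - \<beta>\<bar> \<le> 2 / real a"
proof -
  have "ln phi / real a \<le> 2 / real a"
    using ln_phi_le_1 by (simp add: divide_right_mono)
  then show ?thesis
    using rr_le[OF assms] rr_ge[OF assms] unfolding abs_le_iff by linarith
qed

lemma abs_rr_mult_sub_le:
  assumes "0 \<le> \<beta>" "\<beta> \<le> 1"
  shows "\<bar>rr a \<beta> * phi powr (1 / real a - \<beta> / real a) - \<beta>\<bar> \<le> 2 / real a"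
proof -
  define s where "s = ln phi / real a"
  define q where "q = phi powr (1 / real a)"
  define E where "E = phi powr (1 / real a - \<beta> / real a)"
  have "s \<ge> 0"
    unfolding s_def using ln_phi_pos by simp
  have s_le: "s \<le> 1 / real a"
    unfolding s_def using ln_phi_le_1 a_pos by (simp add: divide_right_mono)
  have "1 \<le> E" "E \<le> q"
    unfolding E_def q_def using assms phi_gt_1 a_pos
    by (auto intro!: ge_one_powr_ge_zero powr_mono simp: divide_right_mono diff_divide_distrib[symmetric])
  have "q \<le> 2"
    unfolding q_def using phi_gt_1 phi_less_2 a_pos powr_mono[of "1 / real a" 1 phi] by simp
  have "rr a \<beta> * E \<le> \<beta> * E"
    using rr_le[OF assms] \<open>1 \<le> E\<close> by (simp add: mult_right_mono)
  also have "\<dots> \<le> \<beta> + (q - 1)"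
    using assms \<open>1 \<le> E\<close> \<open>E \<le> q\<close> mult_left_le_one_le[of "E - 1" \<beta>] by (simp add: algebra_simps)
  also have "\<dots> \<le> \<beta> + 2 * s"
    using phi_root_sub_1_le mult_left_mono[OF \<open>q \<le> 2\<close> \<open>s \<ge> 0\<close>]
    unfolding q_def[symmetric] s_def[symmetric] by simp
  finally have "rr a \<beta> * E \<le> \<beta> + 2 * s" .
  moreover have "\<beta> - s \<le> rr a \<beta> * E"
    using rr_ge[OF assms] rr_nonneg[OF assms(1)] \<open>1 \<le> E\<close> mult_left_mono[of 1 E "rr a \<beta>"]
    unfolding s_def by simp
  ultimately show ?thesis
    using s_le \<open>s \<ge> 0\<close> unfolding E_def by (simp add: abs_le_iff)
qed

lemma main_term_at_bounds:
  assumes "0 \<le> \<beta>" "\<beta> \<le> 1" "0 \<le> p" "p \<le> 1"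
  shows "rr a \<beta> \<le> main_term_at a \<beta> p"
    and "main_term_at a \<beta> p \<le> rr a \<beta> * phi powr (1 / real a - \<beta> / real a)"
proof -
  define q where "q = phi powr (1 / real a)"
  define b where "b = phi powr (\<beta> / real a)"
  define w where "w = phi powr (p / real a)"
  have mono: "phi powr (x / real a) \<le> phi powr (y / real a)" if "x \<le> y" for x y
    using that phi_gt_1 a_pos by (intro powr_mono) (auto simp: divide_right_mono)
  have "1 \<le> b" "1 \<le> w" "w \<le> q"
    unfolding b_def q_def w_def using mono[of 0] mono[of _ 1] assms phi_pos by auto
  have "phi powr (min p \<beta> / real a) = min w b"
    unfolding w_def b_def using mono[of p \<beta>] mono[of \<beta> p] by (cases "p \<le> \<beta>") (auto simp: min_def)
  then have main_eq: "main_term_at a \<beta> p = (rr a \<beta> + min w b - 1) / w"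
    unfolding main_term_at_def w_def by simp
  have upper_eq: "rr a \<beta> * phi powr (1 / real a - \<beta> / real a) = rr a \<beta> * q / b"
    unfolding q_def b_def by (simp add: powr_diff)
  have rq: "rr a \<beta> * q = rr a \<beta> + b - 1"
    unfolding q_def b_def by (rule rr_mult_phi_root)
  have r: "0 \<le> rr a \<beta>" "rr a \<beta> \<le> 1"
    using rr_nonneg[OF assms(1)] rr_le[OF assms(1,2)] assms(2) by auto
  note bounds = affine_min_div_bounds[OF r \<open>1 \<le> w\<close> \<open>w \<le> q\<close> \<open>1 \<le> b\<close> rq]
  show "rr a \<beta> \<le> main_term_at a \<beta> p"
    unfolding main_eq by (rule bounds(1))
  show "main_term_at a \<beta> p \<le> rr a \<beta> * phi powr (1 / real a - \<beta> / real a)"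
    unfolding main_eq upper_eq by (rule bounds(2))
qed

lemma main_term_at_self: "main_term_at a \<beta> \<beta> = rr a \<beta> * phi powr (1 / real a - \<beta> / real a)"
  unfolding main_term_at_def using rr_mult_phi_root[of \<beta>] by (simp add: powr_diff)

lemma main_term_at_0: "0 \<le> \<beta> \<Longrightarrow> main_term_at a \<beta> 0 = rr a \<beta>"
  unfolding main_term_at_def using phi_pos by simp

lemma main_term_bounds:
  assumes "0 \<le> \<beta>" "\<beta> \<le> 1"
  shows "rr a \<beta> \<le> main_term a \<beta> n"
    and "main_term a \<beta> n \<le> rr a \<beta> * phi powr (1 / real a - \<beta> / real a)"
  using main_term_at_bounds[OF assms, of "pp a n"] frac_lt_1[of "FFinv (real n ^ a)"]
  unfolding main_term_eq pp_def by auto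

end

section \<open>Counting by blocks\<close>

definition FFinv_block :: "nat \<Rightarrow> real \<Rightarrow> real \<Rightarrow> nat set" where
  "FFinv_block a x b = {k. 1 \<le> k \<and> FFinv (real k ^ a) \<in> {x..x + b}}"

lemma floor_FFinv_block:
  assumes "k \<in> FFinv_block a (real j) b" "b < 1"
  shows "\<lfloor>FFinv (real k ^ a)\<rfloor> = int j"
  using assms unfolding FFinv_block_def by (simp add: floor_eq_iff)

lemma FFinv_blocks_disjoint:
  assumes "i \<noteq> j" "b < 1" "b' < 1"
  shows "FFinv_block a (real i) b \<inter> FFinv_block a (real j) b' = {}"
  using floor_FFinv_block[OF _ assms(2)] floor_FFinv_block[OF _ assms(3)] assms(1) by fastforce

context positive_exponent
begin

lemma FFinv_block_eq:
  assumes "x \<ge> 1" "b \<ge> 0"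
  shows "FFinv_block a x b = {k. FF_root a x \<le> real k \<and> real k \<le> FF_root a (x + b)}"
proof -
  have "k \<in> FFinv_block a x b \<longleftrightarrow> FF_root a x \<le> real k \<and> real k \<le> FF_root a (x + b)" for k
  proof (cases "k \<ge> 1")
    case True
    then show ?thesis
      unfolding FFinv_block_def using assms
      by (simp add: le_FFinv_power_iff FFinv_power_le_iff)
  next
    case False
    then show ?thesis
      unfolding FFinv_block_def using FF_root_ge_1[OF assms(1)] by simp
  qed
  then show ?thesis by blast
qed

lemma FF_root_interval:
  assumes "x \<ge> 1" "b \<ge> 0"
  shows "0 \<le> FF_root a x" "FF_root a x \<le> FF_root a (x + b)"
  using assms FF_root_ge_1[OF assms(1)] FF_root_mono[of x "x + b"] by auto

lemma finite_FFinv_block: "x \<ge> 1 \<Longrightarrow> b \<ge> 0 \<Longrightarrow> finite (FFinv_block a x b)"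
  using FFinv_block_eq nat_interval_eq[OF FF_root_interval] by simp

lemma card_FFinv_block:
  assumes "x \<ge> 1" "b \<ge> 0"
  shows "\<bar>real (card (FFinv_block a x b)) - (FF_root_approx a (x + b) - FF_root_approx a x)\<bar> \<le> 3"
proof -
  have "\<bar>real (card (FFinv_block a x b)) - (FF_root a (x + b) - FF_root a x)\<bar> \<le> 1"
    unfolding FFinv_block_eq[OF assms] using FF_root_interval[OF assms] by (rule card_nat_interval)
  then show ?thesis
    using FF_root_approx_error[of x] FF_root_approx_error[of "x + b"] assms
    unfolding abs_le_iff by linarith
qed

lemma FFinv_power_le_FFinv_power_iff:
  assumes "k \<ge> 1" "n \<ge> 1"
  shows "FFinv (real k ^ a) \<le> FFinv (real n ^ a) \<longleftrightarrow> k \<le> n"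
  using assms FFinv_power_le_iff FF_root_FFinv_power FFinv_ge_1 by simp

lemma count_eq_FFinv_blocks:
  assumes "0 \<le> \<beta>" "\<beta> < 1" "n \<ge> 1"
  defines "t \<equiv> FFinv (real n ^ a)"
  defines "M \<equiv> nat \<lfloor>t\<rfloor>"
  shows "{k \<in> {1..n}. frac (FFinv (real k ^ a)) \<le> \<beta>}
           = (\<Union>j\<in>{1..<M}. FFinv_block a (real j) \<beta>) \<union> FFinv_block a (real M) (min (frac t) \<beta>)"
proof -
  have "k \<in> {1..n} \<and> frac (FFinv (real k ^ a)) \<le> \<beta> \<longleftrightarrow>
          1 \<le> k \<and> ((\<exists>j\<in>{1..<M}. FFinv (real k ^ a) \<in> {real j..real j + \<beta>})
                     \<or> FFinv (real k ^ a) \<in> {real M..real M + min (frac t) \<beta>})" for k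
  proof (cases "k \<ge> 1")
    case True
    then have "k \<le> n \<longleftrightarrow> FFinv (real k ^ a) \<le> t"
      unfolding t_def using FFinv_power_le_FFinv_power_iff assms(3) by simp
    then show ?thesis
      unfolding M_def using le_and_frac_le_iff[of "FFinv (real k ^ a)" t \<beta>] True assms
      by (simp add: FFinv_ge_1 t_def)
  qed simp
  then show ?thesis
    unfolding FFinv_block_def by blast
qed

lemma sum_FF_root_approx_blocks:
  assumes "M \<ge> 1"
  shows "(\<Sum>j\<in>{1..<M}. FF_root_approx a (real j + \<beta>) - FF_root_approx a (real j))
           = rr a \<beta> * (FF_root_approx a (real M) - FF_root_approx a 1)"
proof -
  have step: "FF_root_approx a (real j + \<beta>) - FF_root_approx a (real j)
          = rr a \<beta> * (FF_root_approx a (real (Suc j)) - FF_root_approx a (real j))" for j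
  proof -
    have "FF_root_approx a (real j + \<beta>) - FF_root_approx a (real j)
            = FF_root_approx a (real j) * (phi powr (\<beta> / real a) - 1)"
      unfolding FF_root_approx_add by (simp add: right_diff_distrib)
    also have "\<dots> = FF_root_approx a (real j) * (rr a \<beta> * (phi powr (1 / real a) - 1))"
      using rr_mult_phi_root[of \<beta>] by (simp add: right_diff_distrib)
    also have "\<dots> = rr a \<beta> * (FF_root_approx a (real j + 1) - FF_root_approx a (real j))"
      unfolding FF_root_approx_add by (simp add: algebra_simps)
    finally show ?thesis
      by (simp add: add.commute)
  qed
  have "(\<Sum>j\<in>{1..<M}. FF_root_approx a (real (Suc j)) - FF_root_approx a (real j))
          = FF_root_approx a (real M) - FF_root_approx a 1"
    using sum_Suc_diff'[OF assms, of "\<lambda>j. FF_root_approx a (real j)"] by simp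
  then show ?thesis
    unfolding step sum_distrib_left[symmetric] by simp
qed

lemma card_count_eq_sum:
  assumes "0 \<le> \<beta>" "\<beta> < 1" "n \<ge> 1"
  defines "t \<equiv> FFinv (real n ^ a)"
  defines "M \<equiv> nat \<lfloor>t\<rfloor>"
  shows "card {k \<in> {1..n}. frac (FFinv (real k ^ a)) \<le> \<beta>}
           = (\<Sum>j\<in>{1..<M}. card (FFinv_block a (real j) \<beta>)) + card (FFinv_block a (real M) (min (frac t) \<beta>))"
proof -
  define m where "m = min (frac t) \<beta>"
  have "0 \<le> m" "m < 1"
    unfolding m_def using assms by auto
  have "M \<ge> 1"
    unfolding M_def t_def using assms(3) FFinv_ge_1[of "real n ^ a"] by (simp add: le_nat_iff)
  have "card (\<Union>j\<in>{1..<M}. FFinv_block a (real j) \<beta>) = (\<Sum>j\<in>{1..<M}. card (FFinv_block a (real j) \<beta>))"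
    using assms(1) FFinv_blocks_disjoint[OF _ assms(2) assms(2)]
    by (intro card_UN_disjoint) (auto intro: finite_FFinv_block)
  moreover have "card ((\<Union>j\<in>{1..<M}. FFinv_block a (real j) \<beta>) \<union> FFinv_block a (real M) m)
                   = card (\<Union>j\<in>{1..<M}. FFinv_block a (real j) \<beta>) + card (FFinv_block a (real M) m)"
  proof (rule card_Un_disjoint)
    show "(\<Union>j\<in>{1..<M}. FFinv_block a (real j) \<beta>) \<inter> FFinv_block a (real M) m = {}"
      using FFinv_blocks_disjoint[of _ M \<beta> m] \<open>m < 1\<close> assms(2) by fastforce
  qed (use \<open>M \<ge> 1\<close> \<open>0 \<le> m\<close> assms(1) in \<open>auto intro: finite_FFinv_block\<close>)
  ultimately show ?thesis
    unfolding count_eq_FFinv_blocks[OF assms(1-3)] t_def[symmetric] M_def[symmetric] m_def[symmetric]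
    by simp
qed

lemma rr_mult_FF_root_approx_1:
  assumes "0 \<le> \<beta>" "\<beta> \<le> 1"
  shows "\<bar>rr a \<beta> * FF_root_approx a 1\<bar> \<le> 2"
proof -
  have "FF_root_approx a 1 \<le> 1 * 2"
    unfolding FF_root_approx_def using phi_pos phi_less_2 phi_gt_1 sqrt_5_eq_phi a_pos
      powr_mono[of "1 / real a" 1 phi]
    by (intro mult_mono powr_le1) auto
  then show ?thesis
    using rr_nonneg[OF assms(1)] rr_le[OF assms] assms(2) FF_root_approx_pos[of a 1]
      mult_mono[of "rr a \<beta>" 1 "FF_root_approx a 1" 2]
    by simp
qed

lemma card_count_approx:
  assumes "0 \<le> \<beta>" "\<beta> < 1" "n \<ge> 1"
  shows "\<bar>real (card {k \<in> {1..n}. frac (FFinv (real k ^ a)) \<le> \<beta>})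
           - FF_root_approx a (FFinv (real n ^ a)) * main_term a \<beta> n\<bar> \<le> 3 * mm a n + 2"
proof -
  define t where "t = FFinv (real n ^ a)"
  define M where "M = nat \<lfloor>t\<rfloor>"
  define m where "m = min (frac t) \<beta>"
  define D where "D j = FF_root_approx a (real j + \<beta>) - FF_root_approx a (real j)" for j
  have "t \<ge> 1"
    unfolding t_def using assms(3) by (simp add: FFinv_ge_1)
  then have "M \<ge> 1" and mm_eq: "mm a n = real M" and t_eq: "t = real M + frac t"
    unfolding M_def mm_def t_def by (simp_all add: le_nat_iff frac_def)
  have "\<bar>(\<Sum>j\<in>{1..<M}. real (card (FFinv_block a (real j) \<beta>))) - sum D {1..<M}\<bar>
          \<le> (\<Sum>j\<in>{1..<M}. \<bar>real (card (FFinv_block a (real j) \<beta>)) - D j\<bar>)"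
    by (simp add: sum_subtractf[symmetric] sum_abs)
  also have "\<dots> \<le> (\<Sum>j\<in>{1..<M}. 3)"
    unfolding D_def using assms by (intro sum_mono card_FFinv_block) auto
  finally have "\<bar>(\<Sum>j\<in>{1..<M}. real (card (FFinv_block a (real j) \<beta>))) - sum D {1..<M}\<bar> \<le> 3 * (real M - 1)"
    using \<open>M \<ge> 1\<close> by (simp add: of_nat_diff)
  moreover have "\<bar>real (card (FFinv_block a (real M) m)) - (FF_root_approx a (real M + m) - FF_root_approx a (real M))\<bar> \<le> 3"
    unfolding m_def using \<open>M \<ge> 1\<close> assms(1) by (intro card_FFinv_block) auto
  moreover have "sum D {1..<M} + (FF_root_approx a (real M + m) - FF_root_approx a (real M))
                   = FF_root_approx a t * main_term a \<beta> n - rr a \<beta> * FF_root_approx a 1"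
  proof -
    have "FF_root_approx a t * main_term a \<beta> n = FF_root_approx a (real M + frac t) * main_term_at a \<beta> (frac t)"
      unfolding main_term_eq pp_def t_def[symmetric] using t_eq by simp
    also have "\<dots> = FF_root_approx a (real M) * (rr a \<beta> + phi powr (m / real a) - 1)"
      unfolding m_def by (rule FF_root_approx_mult_main_term_at)
    finally show ?thesis
      unfolding D_def sum_FF_root_approx_blocks[OF \<open>M \<ge> 1\<close>] FF_root_approx_add[of a "real M" m]
      by (simp add: algebra_simps)
  qed
  moreover note rr_mult_FF_root_approx_1[OF assms(1) less_imp_le[OF assms(2)]]
  ultimately show ?thesis
    unfolding card_count_eq_sum[OF assms] mm_eq t_def[symmetric] M_def[symmetric] m_def[symmetric] abs_le_iff
    by (simp add: of_nat_sum)
qed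

lemma Pn_main_term_beta_1:
  assumes "n \<ge> 1"
  shows "Pn a 1 n = 1" "main_term a 1 n = 1"
proof -
  have "{k \<in> {1..n}. frac (FFinv (real k ^ a)) \<le> 1} = {1..n}"
    using frac_lt_1 less_imp_le by blast
  then show "Pn a 1 n = 1"
    unfolding Pn_def using assms by simp
  have "rr a 1 = 1"
    unfolding rr_def using phi_root_gt_1 by simp
  moreover have "pp a n \<le> 1"
    unfolding pp_def using frac_lt_1 less_imp_le by blast
  ultimately show "main_term a 1 n = 1"
    unfolding main_term_eq main_term_at_def using phi_pos by simp
qed

lemma mm_nonneg: "n \<ge> 1 \<Longrightarrow> mm a n \<ge> 0"
  unfolding mm_def using FFinv_ge_1[of "real n ^ a"] by simp

lemma Pn_error_bound:
  assumes "0 \<le> \<beta>" "\<beta> \<le> 1" "n \<ge> 1"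
  shows "\<bar>Pn a \<beta> n - main_term a \<beta> n\<bar>
           \<le> 6 / (phi / sqrt 5) powr (1 / real a) * (mm a n * phi powr (- mm a n / real a))"
proof (cases "\<beta> = 1")
  case True
  \<comment> \<open>the blocks would overlap at the integers, but both sides are 1\<close>
  then show ?thesis
    using Pn_main_term_beta_1[OF assms(3)] mm_nonneg[OF assms(3)] phi_pos by simp
next
  case False
  define t where "t = FFinv (real n ^ a)"
  define C where "C = real (card {k \<in> {1..n}. frac (FFinv (real k ^ a)) \<le> \<beta>})"
  define M where "M = mm a n"
  have "t \<ge> 1"
    unfolding t_def using assms(3) by (simp add: FFinv_ge_1)
  have "M \<ge> 1" "M \<le> t"
    unfolding M_def mm_def t_def[symmetric] using \<open>t \<ge> 1\<close> by (simp_all add: le_floor_iff)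
  have "card {k \<in> {1..n}. frac (FFinv (real k ^ a)) \<le> \<beta>} \<le> card {1..n}"
    by (intro card_mono) auto
  then have "C \<le> real n"
    unfolding C_def by simp
  have "\<bar>real n - FF_root_approx a t\<bar> \<le> 1"
    using FF_root_approx_error[OF \<open>t \<ge> 1\<close>] FF_root_FFinv_power[of "real n"] assms(3)
    unfolding t_def by simp
  then have "\<bar>C / real n - FF_root_approx a t * main_term a \<beta> n / FF_root_approx a t\<bar>
               \<le> (1 + (3 * M + 2)) / FF_root_approx a t"
    using card_count_approx[OF assms(1) _ assms(3)] False assms(2) \<open>C \<le> real n\<close>
      FF_root_approx_pos[of a t]
    unfolding C_def M_def t_def by (intro abs_ratio_sub_le) auto
  also have "\<dots> \<le> 6 * M / FF_root_approx a M"
    using \<open>M \<ge> 1\<close> \<open>M \<le> t\<close> FF_root_approx_pos[of a M] FF_root_approx_pos[of a t]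
      FF_root_approx_add[of a M "t - M"] phi_gt_1
    by (intro frac_le) (auto intro: ge_one_powr_ge_zero simp: mult_le_cancel_left1)
  also have "\<dots> = 6 / (phi / sqrt 5) powr (1 / real a) * (M * phi powr (- M / real a))"
    unfolding FF_root_approx_def using phi_pos by (simp add: powr_minus_divide)
  finally show ?thesis
    using FF_root_approx_pos[of a t] unfolding Pn_def C_def M_def by simp
qed

lemma Pn_error_bigo:
  assumes "0 \<le> \<beta>" "\<beta> \<le> 1"
  shows "(\<lambda>n. Pn a \<beta> n - main_term a \<beta> n) \<in> O(\<lambda>n. mm a n * phi powr (- mm a n / real a))"
proof (rule bigoI)
  show "\<forall>\<^sub>F n in sequentially. norm (Pn a \<beta> n - main_term a \<beta> n)
          \<le> 6 / (phi / sqrt 5) powr (1 / real a) * norm (mm a n * phi powr (- mm a n / real a))"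
    using Pn_error_bound[OF assms] mm_nonneg by (intro eventually_sequentiallyI[of 1]) simp
qed

end

section \<open>Limit points of the proportion\<close>

context positive_exponent
begin

lemma filterlim_mm_at_top: "filterlim (mm a) at_top sequentially"
  unfolding filterlim_at_top
proof
  fix Z :: real
  define x where "x = max 1 (Z + 1)"
  have "x \<ge> 1"
    unfolding x_def by simp
  have "Z \<le> mm a n" if "n \<ge> nat \<lceil>FF_root a x\<rceil>" for n
  proof -
    have "FF_root a x \<le> real n"
      using that by linarith
    moreover have "n \<ge> 1"
      using FF_root_ge_1[OF \<open>x \<ge> 1\<close>] calculation by simp
    ultimately have "x \<le> FFinv (real n ^ a)"
      using le_FFinv_power_iff[OF \<open>x \<ge> 1\<close>] by simp
    then show ?thesis
      unfolding mm_def x_def by linarith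
  qed
  then show "\<forall>\<^sub>F n in sequentially. Z \<le> mm a n"
    unfolding eventually_sequentially by blast
qed

lemma tendsto_Pn_sub_main_term:
  assumes "0 \<le> \<beta>" "\<beta> \<le> 1"
  shows "(\<lambda>n. Pn a \<beta> n - main_term a \<beta> n) \<longlonglongrightarrow> 0"
proof (rule Lim_null_comparison)
  show "\<forall>\<^sub>F n in sequentially. norm (Pn a \<beta> n - main_term a \<beta> n)
          \<le> 6 / (phi / sqrt 5) powr (1 / real a) * (mm a n * phi powr (- mm a n / real a))"
    using Pn_error_bound[OF assms] by (intro eventually_sequentiallyI[of 1]) simp
  have "((\<lambda>x. x * phi powr (- x / real a)) \<longlongrightarrow> 0) at_top"
    using phi_gt_1 a_pos by real_asymp
  then have "(\<lambda>n. mm a n * phi powr (- mm a n / real a)) \<longlonglongrightarrow> 0"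
    using filterlim_mm_at_top by (rule filterlim_compose)
  then show "(\<lambda>n. 6 / (phi / sqrt 5) powr (1 / real a) * (mm a n * phi powr (- mm a n / real a)))
               \<longlonglongrightarrow> 0"
    by (rule tendsto_mult_right_zero)
qed

lemma filterlim_FF_root_approx: "filterlim (FF_root_approx a) at_top at_top"
  unfolding FF_root_approx_def using a_pos phi_gt_1 sqrt_5_eq_phi by real_asymp

lemma FFinv_power_hits_interval:
  assumes "x \<ge> 1" "\<epsilon> > 0" "3 < FF_root_approx a x * (phi powr (\<epsilon> / real a) - 1)"
  shows "\<exists>n \<ge> 1. FF_root_approx a x - 1 \<le> real n \<and> x \<le> FFinv (real n ^ a) \<and> FFinv (real n ^ a) < x + \<epsilon>"
proof -
  have "FF_root_approx a (x + \<epsilon>) = FF_root_approx a x + FF_root_approx a x * (phi powr (\<epsilon> / real a) - 1)"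
    unfolding FF_root_approx_add by (simp add: algebra_simps)
  then have gap: "FF_root a x + 1 < FF_root a (x + \<epsilon>)"
    using assms FF_root_approx_error[OF \<open>x \<ge> 1\<close>] FF_root_approx_error[of "x + \<epsilon>"]
    unfolding abs_le_iff by linarith
  define n where "n = nat \<lceil>FF_root a x\<rceil>"
  have n: "FF_root a x \<le> real n" "real n < FF_root a x + 1"
    unfolding n_def using FF_root_ge_1[OF \<open>x \<ge> 1\<close>] by linarith+
  then have "n \<ge> 1" "FF_root_approx a x - 1 \<le> real n"
    using FF_root_approx_error[OF \<open>x \<ge> 1\<close>] FF_root_ge_1[OF \<open>x \<ge> 1\<close>]
    unfolding abs_le_iff by linarith+
  moreover have "x \<le> FFinv (real n ^ a)"
    using le_FFinv_power_iff[OF \<open>x \<ge> 1\<close>] n(1) \<open>n \<ge> 1\<close> by simp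
  moreover have "FFinv (real n ^ a) < x + \<epsilon>"
    using le_FFinv_power_iff[of "x + \<epsilon>" "real n"] assms(1,2) n(2) gap \<open>n \<ge> 1\<close>
    by (simp add: not_le[symmetric])
  ultimately show ?thesis
    by blast
qed

lemma frequently_pp_in:
  assumes "0 \<le> \<gamma>" "0 < \<epsilon>" "\<gamma> + \<epsilon> \<le> 1"
  shows "\<exists>\<^sub>F n in sequentially. \<gamma> \<le> pp a n \<and> pp a n < \<gamma> + \<epsilon>"
  unfolding frequently_sequentially
proof
  fix N :: nat
  define d where "d = phi powr (\<epsilon> / real a) - 1"
  have "d > 0"
    unfolding d_def using phi_gt_1 assms(2) a_pos by (simp add: gr_one_powr)
  have "\<forall>\<^sub>F J in sequentially. max (real N + 2) (3 / d) < FF_root_approx a (real J) \<and> J \<ge> 1"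
    using filterlim_compose[OF filterlim_FF_root_approx filterlim_real_sequentially]
    unfolding filterlim_at_top_dense by (auto intro: eventually_conj simp del: max_less_iff_conj)
  then obtain J :: nat where J: "max (real N + 2) (3 / d) < FF_root_approx a (real J)" "J \<ge> 1"
    using eventually_happens'[OF sequentially_bot] by blast
  define x where "x = real J + \<gamma>"
  have "x \<ge> 1"
    unfolding x_def using J(2) assms(1) by simp
  have "FF_root_approx a (real J) \<le> FF_root_approx a x"
    unfolding x_def FF_root_approx_add using FF_root_approx_pos[of a "real J"] phi_gt_1 assms(1)
    by (simp add: ge_one_powr_ge_zero)
  moreover have "3 < FF_root_approx a (real J) * d"
    using J(1) \<open>d > 0\<close> by (simp add: divide_less_eq)
  moreover have "FF_root_approx a (real J) * d \<le> FF_root_approx a x * d"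
    using \<open>FF_root_approx a (real J) \<le> FF_root_approx a x\<close> \<open>d > 0\<close> by (intro mult_right_mono) auto
  ultimately obtain n where n: "n \<ge> 1" "FF_root_approx a x - 1 \<le> real n"
      "x \<le> FFinv (real n ^ a)" "FFinv (real n ^ a) < x + \<epsilon>"
    using FFinv_power_hits_interval[OF \<open>x \<ge> 1\<close> assms(2)] unfolding d_def by fastforce
  then have "\<lfloor>FFinv (real n ^ a)\<rfloor> = int J"
    unfolding x_def using assms by (simp add: floor_eq_iff)
  then have "pp a n = FFinv (real n ^ a) - real J"
    unfolding pp_def by (rule frac_eq_of_floor)
  moreover have "N \<le> n"
    using n(2) J(1) \<open>FF_root_approx a (real J) \<le> FF_root_approx a x\<close> by linarith
  ultimately show "\<exists>n\<ge>N. \<gamma> \<le> pp a n \<and> pp a n < \<gamma> + \<epsilon>"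
    using n(3,4) unfolding x_def by (intro exI[of _ n]) auto
qed

lemma isCont_main_term_at: "isCont (main_term_at a \<beta>) p"
  unfolding main_term_at_def using phi_pos a_pos by (intro continuous_intros) auto

lemma frequently_main_term_near:
  assumes "0 \<le> c" "c < 1" "e > 0"
  shows "\<exists>\<^sub>F n in sequentially. \<bar>main_term a \<beta> n - main_term_at a \<beta> c\<bar> < e"
proof -
  obtain \<delta> where "\<delta> > 0" and \<delta>: "\<And>p. \<bar>p - c\<bar> < \<delta> \<Longrightarrow> \<bar>main_term_at a \<beta> p - main_term_at a \<beta> c\<bar> < e"
    using isCont_main_term_at[of c \<beta>, unfolded continuous_at_eps_delta, rule_format, OF \<open>e > 0\<close>]
    unfolding dist_real_def by auto
  have "\<exists>\<^sub>F n in sequentially. c \<le> pp a n \<and> pp a n < c + min \<delta> (1 - c)"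
    using assms \<open>\<delta> > 0\<close> by (intro frequently_pp_in) auto
  then show ?thesis
  proof (rule frequently_elim1)
    fix n
    assume "c \<le> pp a n \<and> pp a n < c + min \<delta> (1 - c)"
    then have "\<bar>pp a n - c\<bar> < \<delta>"
      by auto
    then show "\<bar>main_term a \<beta> n - main_term_at a \<beta> c\<bar> < e"
      unfolding main_term_eq by (rule \<delta>)
  qed
qed

lemma limsup_Pn:
  assumes "0 \<le> \<beta>" "\<beta> \<le> 1"
  shows "limsup (\<lambda>n. ereal (Pn a \<beta> n)) = ereal (rr a \<beta> * phi powr (1 / real a - \<beta> / real a))"
proof (rule limsup_eq_of_tendsto_diff[OF tendsto_Pn_sub_main_term[OF assms] main_term_bounds(2)[OF assms]])
  fix e :: real
  assume "e > 0"
  show "\<exists>\<^sub>F n in sequentially. rr a \<beta> * phi powr (1 / real a - \<beta> / real a) - e < main_term a \<beta> n"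
  proof (cases "\<beta> = 1")
    case True
    then have "rr a \<beta> * phi powr (1 / real a - \<beta> / real a) - e < main_term a \<beta> n" for n
      using main_term_bounds(1)[OF assms, of n] \<open>e > 0\<close> phi_pos by simp
    then show ?thesis
      unfolding frequently_sequentially by blast
  next
    case False
    then have "\<exists>\<^sub>F n in sequentially. \<bar>main_term a \<beta> n - main_term_at a \<beta> \<beta>\<bar> < e"
      using assms \<open>e > 0\<close> by (intro frequently_main_term_near) auto
    then show ?thesis
      unfolding main_term_at_self by (rule frequently_elim1) auto
  qed
qed

lemma liminf_Pn:
  assumes "0 \<le> \<beta>" "\<beta> \<le> 1"
  shows "liminf (\<lambda>n. ereal (Pn a \<beta> n)) = ereal (rr a \<beta>)"
proof (rule liminf_eq_of_tendsto_diff[OF tendsto_Pn_sub_main_term[OF assms] main_term_bounds(1)[OF assms]])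
  fix e :: real
  assume "e > 0"
  then have "\<exists>\<^sub>F n in sequentially. \<bar>main_term a \<beta> n - main_term_at a \<beta> 0\<bar> < e"
    by (intro frequently_main_term_near) auto
  then show "\<exists>\<^sub>F n in sequentially. main_term a \<beta> n < rr a \<beta> + e"
    unfolding main_term_at_0[OF assms(1)] by (rule frequently_elim1) auto
qed

end

theorem theorem4p10:
  fixes \<beta> :: real
  assumes "0 \<le> \<beta>" and "\<beta> \<le> 1"
  shows "(\<forall>a::nat. a \<ge> 1 \<longrightarrow>
            (\<lambda>n. Pn a \<beta> n - main_term a \<beta> n)
               \<in> O[sequentially](\<lambda>n. mm a n * phi powr (- mm a n / real a))
          \<and> limsup (\<lambda>n. ereal (Pn a \<beta> n)) = ereal (rr a \<beta> * phi powr (1 / real a - \<beta> / real a))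
          \<and> liminf (\<lambda>n. ereal (Pn a \<beta> n)) = ereal (rr a \<beta>))
       \<and> (\<exists>C. \<forall>a::nat. a \<ge> 1 \<longrightarrow>
            \<bar>rr a \<beta> * phi powr (1 / real a - \<beta> / real a) - \<beta>\<bar> \<le> C / real a
          \<and> \<bar>rr a \<beta> - \<beta>\<bar> \<le> C / real a)"
proof (intro conjI allI impI exI)
  fix a :: nat
  assume "a \<ge> 1"
  then interpret positive_exponent a
    by unfold_locales
  show "(\<lambda>n. Pn a \<beta> n - main_term a \<beta> n) \<in> O(\<lambda>n. mm a n * phi powr (- mm a n / real a))"
    using Pn_error_bigo[OF assms] .
  show "limsup (\<lambda>n. ereal (Pn a \<beta> n)) = ereal (rr a \<beta> * phi powr (1 / real a - \<beta> / real a))"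
    using limsup_Pn[OF assms] .
  show "liminf (\<lambda>n. ereal (Pn a \<beta> n)) = ereal (rr a \<beta>)"
    using liminf_Pn[OF assms] .
  show "\<bar>rr a \<beta> * phi powr (1 / real a - \<beta> / real a) - \<beta>\<bar> \<le> 2 / real a"
    using abs_rr_mult_sub_le[OF assms] .
  show "\<bar>rr a \<beta> - \<beta>\<bar> \<le> 2 / real a"
    using abs_rr_sub_le[OF assms] .
qed

end
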